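(* Let $\mathcal{G}=(V,L)$ be a finite connected undirected graph with monitor set $M$ and non-monitor set $N=V\setminus M$, and let the measurement paths be given by Controllable Arbitrary-path Probing (CAP). Then for every non-monitor $v\in N$, the maximum identifiability index of $v$ under CAP is $\Omega_{\mathrm{CAP}}(v)=\Gamma_{\mathcal{G}^*}(v,m')$, i.e., $|C_{\mathcal{G}^*}(v,m')|$.
   Context: Failure model: a failure set is any $F\subseteq N$; a path fails iff it traverses a node of $F$. $P_F$ is the set of measurement paths traversing a node of $F$; $F_1,F_2$ distinguishable iff $P_{F_1}\ne P_{F_2}$. $S\subseteq N$ is $k$-identifiable if any two failure sets $F_1,F_2$ with $|F_1|,|F_2|\le k$ and $F_1\cap S\ne F_2\cap S$ are distinguishable (every set is trivially $0$-identifiable). A node $v$ is $k$-identifiable if $\{v\}$ is; $\Omega(v)$ is the maximum $k\in\{0,1,\dots,|N|\}$ such that $v$ is $k$-identifiable. Under CAP, the measurement paths are all walks in $\mathcal{G}$ (repeated nodes/links allowed) starting and ending at monitors (possibly the same). $\mathcal{N}(M)$ is the set of non-monitors adjacent to some monitor. $\mathcal{G}^*$ is obtained from $\mathcal{G}$ by deleting all monitors, adding a virtual node $m'$, and linking $m'$ to every node of $\mathcal{N}(M)$. For nodes $s,t$ of a graph $\mathcal{H}$, $C_{\mathcal{H}}(s,t)$ is a minimum-cardinality set of nodes (other than $s,t$) whose deletion destroys all $s$–$t$ paths; if $s,t$ are adjacent, $C_{\mathcal{H}}(s,t):=V(\mathcal{H})\setminus\{t\}$. *)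

theory Defs
  imports Main
begin

definition simple_graph :: "'a set \<Rightarrow> ('a \<Rightarrow> 'a \<Rightarrow> bool) \<Rightarrow> bool" where
  "simple_graph V E \<longleftrightarrow> finite V \<and>
     (\<forall>u w. E u w \<longrightarrow> u \<in> V \<and> w \<in> V \<and> u \<noteq> w \<and> E w u)"

definition walk :: "'a set \<Rightarrow> ('a \<Rightarrow> 'a \<Rightarrow> bool) \<Rightarrow> 'a list \<Rightarrow> bool" where
  "walk V E xs \<longleftrightarrow> xs \<noteq> [] \<and> set xs \<subseteq> V \<and> successively E xs"

definition connected_graph :: "'a set \<Rightarrow> ('a \<Rightarrow> 'a \<Rightarrow> bool) \<Rightarrow> bool" where
  "connected_graph V E \<longleftrightarrow>
     (\<forall>u\<in>V. \<forall>w\<in>V. \<exists>xs. walk V E xs \<and> hd xs = u \<and> last xs = w)"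

definition cap_paths :: "'a set \<Rightarrow> ('a \<Rightarrow> 'a \<Rightarrow> bool) \<Rightarrow> 'a set \<Rightarrow> 'a list set" where
  "cap_paths V E M = {xs. walk V E xs \<and> hd xs \<in> M \<and> last xs \<in> M}"

definition paths_hit :: "'a list set \<Rightarrow> 'a set \<Rightarrow> 'a list set" where
  "paths_hit P F = {p \<in> P. set p \<inter> F \<noteq> {}}"

definition distinguishable :: "'a list set \<Rightarrow> 'a set \<Rightarrow> 'a set \<Rightarrow> bool" where
  "distinguishable P F1 F2 \<longleftrightarrow> paths_hit P F1 \<noteq> paths_hit P F2"

definition k_identifiable :: "'a list set \<Rightarrow> 'a set \<Rightarrow> 'a set \<Rightarrow> nat \<Rightarrow> bool" where
  "k_identifiable P N S k \<longleftrightarrow>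
     (\<forall>F1 F2. F1 \<subseteq> N \<and> F2 \<subseteq> N \<and> card F1 \<le> k \<and> card F2 \<le> k \<and> F1 \<inter> S \<noteq> F2 \<inter> S
        \<longrightarrow> distinguishable P F1 F2)"

definition Omega :: "'a list set \<Rightarrow> 'a set \<Rightarrow> 'a \<Rightarrow> nat" where
  "Omega P N v = (GREATEST k. k \<le> card N \<and> k_identifiable P N {v} k)"

definition nbr_monitors :: "'a set \<Rightarrow> ('a \<Rightarrow> 'a \<Rightarrow> bool) \<Rightarrow> 'a set \<Rightarrow> 'a set" where
  "nbr_monitors V E M = {u \<in> V - M. \<exists>m\<in>M. E u m}"

text \<open>The graph G*: original non-monitors are Some u, the virtual node m' is None.\<close>

definition star_vertices :: "'a set \<Rightarrow> 'a set \<Rightarrow> 'a option set" where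
  "star_vertices V M = Some ` (V - M) \<union> {None}"

fun star_edges :: "'a set \<Rightarrow> ('a \<Rightarrow> 'a \<Rightarrow> bool) \<Rightarrow> 'a set \<Rightarrow> 'a option \<Rightarrow> 'a option \<Rightarrow> bool" where
  "star_edges V E M (Some a) (Some b) = (a \<in> V - M \<and> b \<in> V - M \<and> E a b)"
| "star_edges V E M None (Some b) = (b \<in> nbr_monitors V E M)"
| "star_edges V E M (Some a) None = (a \<in> nbr_monitors V E M)"
| "star_edges V E M None None = False"

definition vertex_cut :: "'b set \<Rightarrow> ('b \<Rightarrow> 'b \<Rightarrow> bool) \<Rightarrow> 'b set \<Rightarrow> 'b \<Rightarrow> 'b \<Rightarrow> bool" where
  "vertex_cut H EH X s t \<longleftrightarrow> X \<subseteq> H - {s, t} \<and>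
     \<not> (\<exists>xs. walk (H - X) EH xs \<and> hd xs = s \<and> last xs = t)"

text \<open>Gamma_H(s,t) = |C_H(s,t)|; for adjacent s,t, C_H(s,t) = V(H) - {t}.\<close>

definition Gamma :: "'b set \<Rightarrow> ('b \<Rightarrow> 'b \<Rightarrow> bool) \<Rightarrow> 'b \<Rightarrow> 'b \<Rightarrow> nat" where
  "Gamma H EH s t = (if EH s t then card (H - {t})
                     else (LEAST k. \<exists>X. vertex_cut H EH X s t \<and> card X = k))"

end

theory Submission
  imports Defs
begin

text \<open>
  Suppose a failure set F containing v hits exactly the same CAP paths as a failure set F'
  not containing v.  The nodes lying on some path that avoids F' (equivalently, avoids F)
  include every monitor but not v, so any walk from v to a monitor enters them along an
  edge a-b.  Detouring such a working path through b to a and back shows that a \<in> F'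
  (else the detour works) and then a \<in> F (the detour fails although the path did not):
  thus F - {v} meets every walk from v to a monitor.  Conversely, if X meets every such walk,
  every CAP path through v already meets X, so X and insert v X are confused.  Hence
  \<Omega>(v) is the least size of such a separating set, and these sets are exactly the
  v-m' vertex cuts of G*.  If v is adjacent to a monitor m, the probe m v m alone decides
  the state of v.
\<close>

definition monitor_separator ::
    "'a set \<Rightarrow> ('a \<Rightarrow> 'a \<Rightarrow> bool) \<Rightarrow> 'a set \<Rightarrow> 'a \<Rightarrow> 'a set \<Rightarrow> bool" where
  "monitor_separator V E M v X \<longleftrightarrow>
     (\<forall>xs. walk V E xs \<longrightarrow> hd xs = v \<longrightarrow> last xs \<in> M \<longrightarrow> set xs \<inter> X \<noteq> {})"

lemma list_crossing_step:
  assumes "xs \<noteq> []" "\<not> P (hd xs)" "P (last xs)"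
  shows "\<exists>ys a b zs. xs = ys @ a # b # zs \<and> \<not> P a \<and> P b"
  using assms
proof (induction xs)
  case Nil
  then show ?case by simp
next
  case (Cons x xs)
  show ?case
  proof (cases "xs = []")
    case True
    with Cons.prems show ?thesis by simp
  next
    case False
    show ?thesis
    proof (cases "P (hd xs)")
      case True
      with False Cons.prems show ?thesis
        by (intro exI[of _ "[]"] exI[of _ x] exI[of _ "hd xs"] exI[of _ "tl xs"]) simp
    next
      case nP: False
      from Cons.IH[OF False nP] Cons.prems False obtain ys a b zs
        where "xs = ys @ a # b # zs" "\<not> P a" "P b" by auto
      then show ?thesis by (intro exI[of _ "x # ys"]) auto
    qed
  qed
qed

lemma star_walk_of_walk_to_monitor:
  assumes "walk V E xs" "hd xs \<in> V - M" "last xs \<in> M" "set xs \<inter> X = {}"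
  shows "\<exists>ws. walk (star_vertices V M - Some ` X) (star_edges V E M) ws
              \<and> hd ws = Some (hd xs) \<and> last ws = None"
proof -
  have "\<exists>x\<in>set xs. x \<in> M" using assms(1,3) unfolding walk_def by auto
  then obtain ys m zs where xs: "xs = ys @ m # zs" "m \<in> M" "\<forall>y\<in>set ys. y \<notin> M"
    using split_list_first_prop[of xs "\<lambda>x. x \<in> M"] by blast
  have "ys \<noteq> []" using assms(2) xs by auto
  have "set xs \<subseteq> V" "successively E xs" using assms(1) unfolding walk_def by auto
  then have ysN: "set ys \<subseteq> V - M" and "successively E ys" "E (last ys) m"
    using \<open>ys \<noteq> []\<close> xs by (auto simp: successively_append_iff successively_Cons)
  moreover have "last ys \<in> V - M" using ysN \<open>ys \<noteq> []\<close> last_in_set by blast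
  ultimately have "successively (star_edges V E M) (map Some ys @ [None])"
    using \<open>ys \<noteq> []\<close> xs(2)
    by (auto simp: successively_append_iff successively_map last_map nbr_monitors_def
             elim!: successively_mono)
  moreover have "set (map Some ys @ [None]) \<subseteq> star_vertices V M - Some ` X"
    using ysN assms(4) xs(1) by (auto simp: star_vertices_def)
  ultimately show ?thesis using \<open>ys \<noteq> []\<close> xs(1)
    by (intro exI[of _ "map Some ys @ [None]"]) (auto simp: walk_def hd_map)
qed

lemma walk_to_monitor_of_star_walk:
  assumes "M \<subseteq> V" "X \<subseteq> V - M"
    and "walk (star_vertices V M - Some ` X) (star_edges V E M) ws"
    and "hd ws = Some v" "last ws = None"
  shows "\<exists>xs. walk V E xs \<and> hd xs = v \<and> last xs \<in> M \<and> set xs \<inter> X = {}"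
proof -
  have "None \<in> set ws" using assms(3,5) unfolding walk_def by (metis last_in_set)
  then obtain ys zs where ws: "ws = ys @ None # zs" "\<forall>y\<in>set ys. y \<noteq> None"
    using split_list_first_prop[of ws "\<lambda>x. x = None"] by blast
  define us where "us = map the ys"
  have ys: "ys = map Some us"
    unfolding us_def using ws(2) by (induction ys) auto
  have "us \<noteq> []" using assms(4) ws ys by auto
  have "set ws \<subseteq> star_vertices V M - Some ` X" "successively (star_edges V E M) ws"
    using assms(3) unfolding walk_def by auto
  then have usN: "set us \<subseteq> V - M" "set us \<inter> X = {}" and "successively E us"
    and "last us \<in> nbr_monitors V E M"
    using \<open>us \<noteq> []\<close> unfolding ws(1) ys
    by (auto simp: star_vertices_def successively_append_iff successively_Cons
             successively_map last_map elim!: successively_mono)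
  then obtain m where m: "m \<in> M" "E (last us) m" unfolding nbr_monitors_def by blast
  have "walk V E (us @ [m])"
    using \<open>successively E us\<close> m \<open>us \<noteq> []\<close> usN assms(1)
    by (auto simp: walk_def successively_append_iff)
  moreover have "hd (us @ [m]) = v" using assms(4) \<open>us \<noteq> []\<close> unfolding ws(1) ys by (auto simp: hd_map)
  ultimately show ?thesis
    using m usN assms by (intro exI[of _ "us @ [m]"]) auto
qed

lemma vertex_cut_star_iff_monitor_separator:
  assumes "M \<subseteq> V" "v \<in> V - M"
  shows "vertex_cut (star_vertices V M) (star_edges V E M) (Some ` X) (Some v) None
           \<longleftrightarrow> X \<subseteq> V - M - {v} \<and> monitor_separator V E M v X"
proof (cases "X \<subseteq> V - M - {v}")
  case True
  have "(\<exists>ws. walk (star_vertices V M - Some ` X) (star_edges V E M) ws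
              \<and> hd ws = Some v \<and> last ws = None)
        \<longleftrightarrow> (\<exists>xs. walk V E xs \<and> hd xs = v \<and> last xs \<in> M \<and> set xs \<inter> X = {})"
  proof
    assume "\<exists>ws. walk (star_vertices V M - Some ` X) (star_edges V E M) ws
                 \<and> hd ws = Some v \<and> last ws = None"
    then show "\<exists>xs. walk V E xs \<and> hd xs = v \<and> last xs \<in> M \<and> set xs \<inter> X = {}"
      using walk_to_monitor_of_star_walk[OF assms(1)] True by blast
  next
    assume "\<exists>xs. walk V E xs \<and> hd xs = v \<and> last xs \<in> M \<and> set xs \<inter> X = {}"
    then obtain xs where "walk V E xs" "hd xs = v" "last xs \<in> M" "set xs \<inter> X = {}" by blast
    then show "\<exists>ws. walk (star_vertices V M - Some ` X) (star_edges V E M) ws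
                    \<and> hd ws = Some v \<and> last ws = None"
      using star_walk_of_walk_to_monitor[of V E xs M X] assms(2) by auto
  qed
  moreover have "Some ` X \<subseteq> star_vertices V M - {Some v, None}"
    using True by (auto simp: star_vertices_def)
  ultimately show ?thesis
    using True unfolding vertex_cut_def monitor_separator_def by blast
next
  case False
  then have "\<not> Some ` X \<subseteq> star_vertices V M - {Some v, None}"
    by (auto simp: star_vertices_def)
  with False show ?thesis unfolding vertex_cut_def by blast
qed

lemma paths_hit_insert_monitor_separator:
  assumes "monitor_separator V E M v X"
  shows "paths_hit (cap_paths V E M) (insert v X) = paths_hit (cap_paths V E M) X"
proof -
  have "set p \<inter> X \<noteq> {}" if "p \<in> cap_paths V E M" "v \<in> set p" for p
  proof -
    obtain ys zs where p: "p = ys @ v # zs" using split_list[OF \<open>v \<in> set p\<close>] by blast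
    have "walk V E p" "last p \<in> M" using that(1) unfolding cap_paths_def by auto
    then have "walk V E (v # zs)" "last (v # zs) \<in> M"
      unfolding p walk_def by (auto simp: successively_append_iff split: if_splits)
    then have "set (v # zs) \<inter> X \<noteq> {}"
      using assms unfolding monitor_separator_def by fastforce
    then show ?thesis unfolding p by auto
  qed
  then show ?thesis unfolding paths_hit_def by blast
qed

lemma cap_path_detour:
  assumes "symp E" "p \<in> cap_paths V E M" "b \<in> set p" "E a b" "a \<in> V"
  shows "\<exists>q \<in> cap_paths V E M. set q = insert a (set p)"
proof -
  obtain ps qs where p: "p = ps @ b # qs" using split_list[OF assms(3)] by blast
  let ?q = "ps @ b # a # b # qs"
  have "walk V E p" "hd p \<in> M" "last p \<in> M" using assms(2) unfolding cap_paths_def by auto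
  moreover have "hd ?q = hd p" "last ?q = last p" unfolding p by (cases ps; cases qs; simp)+
  ultimately have "?q \<in> cap_paths V E M"
    using assms(1,4,5) unfolding cap_paths_def walk_def p
    by (auto simp: successively_append_iff successively_Cons dest: sympD)
  moreover have "set ?q = insert a (set p)" unfolding p by auto
  ultimately show ?thesis by blast
qed

definition working_nodes :: "'a list set \<Rightarrow> 'a set \<Rightarrow> 'a set" where
  "working_nodes P F = {u. \<exists>p \<in> P. u \<in> set p \<and> set p \<inter> F = {}}"

lemma working_nodesI: "p \<in> P \<Longrightarrow> u \<in> set p \<Longrightarrow> set p \<inter> F = {} \<Longrightarrow> u \<in> working_nodes P F"
  unfolding working_nodes_def by blast

lemma avoids_of_same_paths_hit:
  assumes "paths_hit P F1 = paths_hit P F2" "p \<in> P" "set p \<inter> F2 = {}"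
  shows "set p \<inter> F1 = {}"
proof -
  have "p \<notin> paths_hit P F2" using assms(3) unfolding paths_hit_def by blast
  then have "p \<notin> paths_hit P F1" unfolding assms(1) .
  with assms(2) show ?thesis unfolding paths_hit_def by blast
qed

lemma edge_into_working_nodes:
  assumes "symp E" and eq: "paths_hit (cap_paths V E M) F1 = paths_hit (cap_paths V E M) F2"
    and "E a b" "a \<in> V" "b \<in> working_nodes (cap_paths V E M) F2"
    and "a \<notin> working_nodes (cap_paths V E M) F2"
  shows "a \<in> F1 \<inter> F2"
proof -
  let ?P = "cap_paths V E M"
  obtain p where p: "p \<in> ?P" "b \<in> set p" "set p \<inter> F2 = {}"
    using assms(5) unfolding working_nodes_def by blast
  then obtain q where q: "q \<in> ?P" "set q = insert a (set p)"
    using cap_path_detour[OF assms(1) _ _ assms(3,4)] by blast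
  have "a \<in> F2"
  proof (rule ccontr)
    assume "a \<notin> F2"
    with q p(3) have "a \<in> working_nodes ?P F2" by (intro working_nodesI[of q]) auto
    with assms(6) show False by contradiction
  qed
  with q have "q \<in> paths_hit ?P F2" unfolding paths_hit_def by blast
  then have "q \<in> paths_hit ?P F1" unfolding eq .
  then have "set q \<inter> F1 \<noteq> {}" unfolding paths_hit_def by blast
  with q(2) avoids_of_same_paths_hit[OF eq p(1,3)] have "a \<in> F1" by auto
  with \<open>a \<in> F2\<close> show ?thesis by blast
qed

lemma monitor_separator_of_same_paths_hit:
  assumes "symp E" "F2 \<inter> M = {}" "v \<in> F1" "v \<notin> F2"
    and eq: "paths_hit (cap_paths V E M) F1 = paths_hit (cap_paths V E M) F2"
  shows "monitor_separator V E M v (F1 - {v})"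
  unfolding monitor_separator_def
proof (intro allI impI notI)
  fix xs assume xs: "walk V E xs" "hd xs = v" "last xs \<in> M" "set xs \<inter> (F1 - {v}) = {}"
  let ?R = "working_nodes (cap_paths V E M) F2"
  have "[last xs] \<in> cap_paths V E M" using xs(1,3) unfolding cap_paths_def walk_def by auto
  with xs(3) assms(2) have "last xs \<in> ?R" by (intro working_nodesI) auto
  moreover have "hd xs \<notin> ?R"
    using avoids_of_same_paths_hit[OF eq] assms(3) xs(2) unfolding working_nodes_def by blast
  ultimately obtain ys a b zs where split: "xs = ys @ a # b # zs" "a \<notin> ?R" "b \<in> ?R"
    using list_crossing_step[of xs "\<lambda>x. x \<in> ?R"] xs(1) unfolding walk_def by blast
  have "E a b" "a \<in> V"
    using xs(1) unfolding split(1) walk_def by (auto simp: successively_append_iff successively_Cons)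
  with edge_into_working_nodes[OF assms(1) eq] split(2,3) have "a \<in> F1 \<inter> F2" by blast
  moreover have "a \<in> set xs" unfolding split(1) by simp
  ultimately show False using assms(4) xs(4) by blast
qed

lemma k_identifiable_singletonI:
  assumes "\<And>F1 F2. F1 \<subseteq> N \<Longrightarrow> F2 \<subseteq> N \<Longrightarrow> card F1 \<le> k \<Longrightarrow> card F2 \<le> k
             \<Longrightarrow> v \<in> F1 \<Longrightarrow> v \<notin> F2 \<Longrightarrow> paths_hit P F1 \<noteq> paths_hit P F2"
  shows "k_identifiable P N {v} k"
  unfolding k_identifiable_def distinguishable_def
proof (intro allI impI)
  fix F1 F2 assume F: "F1 \<subseteq> N \<and> F2 \<subseteq> N \<and> card F1 \<le> k \<and> card F2 \<le> k \<and> F1 \<inter> {v} \<noteq> F2 \<inter> {v}"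
  then have "v \<in> F1 \<and> v \<notin> F2 \<or> v \<in> F2 \<and> v \<notin> F1" by auto
  then show "paths_hit P F1 \<noteq> paths_hit P F2" using assms F by metis
qed

lemma k_identifiable_mono:
  "j \<le> k \<Longrightarrow> k_identifiable P N S k \<Longrightarrow> k_identifiable P N S j"
  unfolding k_identifiable_def by (meson order_trans)

lemma Omega_eqI:
  assumes "k \<le> card N" "k_identifiable P N {v} k"
    and "k < card N \<Longrightarrow> \<not> k_identifiable P N {v} (Suc k)"
  shows "Omega P N v = k"
  unfolding Omega_def
proof (rule Greatest_equality)
  fix j assume j: "j \<le> card N \<and> k_identifiable P N {v} j"
  show "j \<le> k"
  proof (rule ccontr)
    assume "\<not> j \<le> k"
    with j have "k < card N" "k_identifiable P N {v} (Suc k)"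
      using k_identifiable_mono[of "Suc k" j] by auto
    with assms(3) show False by blast
  qed
qed (use assms in simp)

lemma k_identifiable_cap_adjacent_monitor:
  assumes "symp E" "M \<subseteq> V" "v \<in> V - M" "m \<in> M" "E v m"
  shows "k_identifiable (cap_paths V E M) (V - M) {v} k"
proof (rule k_identifiable_singletonI)
  have probe: "[m, v, m] \<in> cap_paths V E M"
    using assms by (auto simp: cap_paths_def walk_def dest: sympD)
  fix F1 F2 assume "F1 \<subseteq> V - M" "F2 \<subseteq> V - M" "v \<in> F1" "v \<notin> F2"
  with probe assms(4) have "[m, v, m] \<in> paths_hit (cap_paths V E M) F1"
    "[m, v, m] \<notin> paths_hit (cap_paths V E M) F2"
    unfolding paths_hit_def by auto
  then show "paths_hit (cap_paths V E M) F1 \<noteq> paths_hit (cap_paths V E M) F2" by blast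
qed

theorem Omega_cap_eq_min_monitor_separator:
  assumes "symp E" "finite V" "M \<subseteq> V" "v \<in> V - M"
    and X: "X \<subseteq> V - M - {v}" "monitor_separator V E M v X"
    and min: "\<And>Y. Y \<subseteq> V - M - {v} \<Longrightarrow> monitor_separator V E M v Y \<Longrightarrow> card X \<le> card Y"
  shows "Omega (cap_paths V E M) (V - M) v = card X"
proof (rule Omega_eqI)
  have "finite (V - M)" using assms(2) by blast
  then show "card X \<le> card (V - M)" using X(1) by (intro card_mono) auto
  show "k_identifiable (cap_paths V E M) (V - M) {v} (card X)"
  proof (rule k_identifiable_singletonI)
    fix F1 F2 assume F: "F1 \<subseteq> V - M" "F2 \<subseteq> V - M" "card F1 \<le> card X" "v \<in> F1" "v \<notin> F2"
    show "paths_hit (cap_paths V E M) F1 \<noteq> paths_hit (cap_paths V E M) F2"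
    proof
      assume eq: "paths_hit (cap_paths V E M) F1 = paths_hit (cap_paths V E M) F2"
      have "F2 \<inter> M = {}" using F(2) by blast
      from monitor_separator_of_same_paths_hit[OF assms(1) this F(4,5) eq]
      have "card X \<le> card (F1 - {v})" by (rule min[rotated]) (use F(1) in blast)
      moreover have "finite F1" using F(1) \<open>finite (V - M)\<close> by (rule finite_subset)
      ultimately show False using card_Diff1_less[of F1 v] F(3,4) by linarith
    qed
  qed
  show "\<not> k_identifiable (cap_paths V E M) (V - M) {v} (Suc (card X))"
  proof
    assume ident: "k_identifiable (cap_paths V E M) (V - M) {v} (Suc (card X))"
    have "finite X" using X(1) \<open>finite (V - M)\<close> by (meson Diff_subset finite_subset)
    then have "card (insert v X) \<le> Suc (card X)" by (simp add: card_insert_if)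
    moreover have "insert v X \<subseteq> V - M" "X \<subseteq> V - M" "insert v X \<inter> {v} \<noteq> X \<inter> {v}"
      using X(1) assms(4) by auto
    ultimately have "distinguishable (cap_paths V E M) (insert v X) X"
      using ident unfolding k_identifiable_def by simp
    with paths_hit_insert_monitor_separator[OF X(2)] show False
      unfolding distinguishable_def by blast
  qed
qed

lemma vertex_cut_all_others:
  assumes "s \<noteq> t" "\<not> EH s t"
  shows "vertex_cut H EH (H - {s, t}) s t"
  unfolding vertex_cut_def
proof (intro conjI notI)
  assume "\<exists>xs. walk (H - (H - {s, t})) EH xs \<and> hd xs = s \<and> last xs = t"
  then obtain xs where xs: "walk (H - (H - {s, t})) EH xs" "hd xs = s" "last xs = t" by blast
  then have "xs \<noteq> []" "hd xs \<noteq> t" using assms(1) unfolding walk_def by auto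
  then obtain ys a b zs where split: "xs = ys @ a # b # zs" "a \<noteq> t" "b = t"
    using list_crossing_step[of xs "\<lambda>x. x = t"] xs(3) by blast
  have "set xs \<subseteq> H - (H - {s, t})" "successively EH xs" using xs(1) unfolding walk_def by auto
  moreover have "a \<in> set xs" unfolding split(1) by simp
  ultimately have "a \<in> {s, t}" by blast
  with split(2) have "a = s" by simp
  from \<open>successively EH xs\<close> have "EH a b" unfolding split(1) by (simp add: successively_append_iff)
  with \<open>a = s\<close> split(3) assms(2) show False by simp
qed simp

lemma Gamma_min_vertex_cut:
  assumes "s \<noteq> t" "\<not> EH s t"
  obtains X where "vertex_cut H EH X s t" "card X = Gamma H EH s t"
    and "\<And>Y. vertex_cut H EH Y s t \<Longrightarrow> Gamma H EH s t \<le> card Y"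
proof -
  define c where "c = (LEAST k. \<exists>X. vertex_cut H EH X s t \<and> card X = k)"
  have Gamma: "Gamma H EH s t = c" using assms(2) unfolding Gamma_def c_def by simp
  have "\<exists>X. vertex_cut H EH X s t \<and> card X = c"
    unfolding c_def
    by (rule LeastI_ex) (use vertex_cut_all_others[of s t EH H] assms in blast)
  moreover have "c \<le> card Y" if "vertex_cut H EH Y s t" for Y
    unfolding c_def by (rule Least_le) (use that in blast)
  ultimately show thesis using that unfolding Gamma by blast
qed

lemma Gamma_star_min_monitor_separator:
  assumes "M \<subseteq> V" "v \<in> V - M" "\<not> star_edges V E M (Some v) None"
  obtains X where "X \<subseteq> V - M - {v}" "monitor_separator V E M v X"
    and "card X = Gamma (star_vertices V M) (star_edges V E M) (Some v) None"
    and "\<And>Y. Y \<subseteq> V - M - {v} \<Longrightarrow> monitor_separator V E M v Y \<Longrightarrow> card X \<le> card Y"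
proof -
  let ?\<Gamma> = "Gamma (star_vertices V M) (star_edges V E M) (Some v) None"
  obtain X0 where X0: "vertex_cut (star_vertices V M) (star_edges V E M) X0 (Some v) None"
    "card X0 = ?\<Gamma>"
    "\<And>Y. vertex_cut (star_vertices V M) (star_edges V E M) Y (Some v) None \<Longrightarrow> ?\<Gamma> \<le> card Y"
    by (rule Gamma_min_vertex_cut[of "Some v" None "star_edges V E M" "star_vertices V M"])
      (use assms(3) in simp_all)
  have "X0 \<subseteq> Some ` (V - M)"
    using X0(1) unfolding vertex_cut_def star_vertices_def by blast
  then obtain X where X0_eq: "X0 = Some ` X" unfolding subset_image_iff by blast
  have cut_iff: "vertex_cut (star_vertices V M) (star_edges V E M) (Some ` Y) (Some v) None
      \<longleftrightarrow> Y \<subseteq> V - M - {v} \<and> monitor_separator V E M v Y" for Y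
    by (rule vertex_cut_star_iff_monitor_separator[OF assms(1,2)])
  have card_X: "card X = ?\<Gamma>" using X0(2) unfolding X0_eq by (simp add: card_image)
  show thesis
  proof (rule that)
    show "X \<subseteq> V - M - {v}" "monitor_separator V E M v X"
      using X0(1) cut_iff[of X] unfolding X0_eq by blast+
    show "card X = ?\<Gamma>" by (fact card_X)
    fix Y assume "Y \<subseteq> V - M - {v}" "monitor_separator V E M v Y"
    then have "?\<Gamma> \<le> card (Some ` Y)" using X0(3) cut_iff[of Y] by blast
    then show "card X \<le> card Y" unfolding card_X by (simp add: card_image)
  qed
qed

lemma Gamma_star_adjacent:
  "star_edges V E M (Some v) None
     \<Longrightarrow> Gamma (star_vertices V M) (star_edges V E M) (Some v) None = card (V - M)"
  by (simp add: Gamma_def star_vertices_def card_image)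

theorem theorem4:
  fixes V M :: "'a set" and E :: "'a \<Rightarrow> 'a \<Rightarrow> bool" and v :: 'a
  assumes "simple_graph V E"
    and "connected_graph V E"
    and "M \<subseteq> V"
    and "v \<in> V - M"
  shows "Omega (cap_paths V E M) (V - M) v
           = Gamma (star_vertices V M) (star_edges V E M) (Some v) None"
proof -
  have "symp E" "finite V" using assms(1) unfolding simple_graph_def by (auto intro: sympI)
  show ?thesis
  proof (cases "star_edges V E M (Some v) None")
    case True
    then obtain m where "m \<in> M" "E v m" by (auto simp: nbr_monitors_def)
    then have "Omega (cap_paths V E M) (V - M) v = card (V - M)"
      by (intro Omega_eqI k_identifiable_cap_adjacent_monitor[OF \<open>symp E\<close> assms(3,4)]) auto
    with Gamma_star_adjacent[OF True] show ?thesis by simp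
  next
    case False
    obtain X where "X \<subseteq> V - M - {v}" "monitor_separator V E M v X"
      "card X = Gamma (star_vertices V M) (star_edges V E M) (Some v) None"
      "\<And>Y. Y \<subseteq> V - M - {v} \<Longrightarrow> monitor_separator V E M v Y \<Longrightarrow> card X \<le> card Y"
      using Gamma_star_min_monitor_separator[OF assms(3,4) False] by blast
    with Omega_cap_eq_min_monitor_separator[OF \<open>symp E\<close> \<open>finite V\<close> assms(3,4)]
    show ?thesis by metis
  qed
qed

end
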